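(* Let $n\ge3$, $k\ge0$, let $m\ge2$, and let $C=\{(x_\alpha,y_\alpha):\alpha\in[m]\}$ be a strict alternating cycle in $\mathrm{Inc}(A,B)$ for the crown $S_n^k$. Then $mn\le 2(n+k)$.
   Context: For integers $n\ge3$, $k\ge0$, the crown $S_n^k$ is the poset with ground set $A\cup B$, $A=\{a_1,\dots,a_{n+k}\}$, $B=\{b_1,\dots,b_{n+k}\}$, indices cyclic modulo $n+k$; elements of $A$ are pairwise incomparable, as are elements of $B$, and $a_i$ is incomparable to $b_j$ when $j\in\{i,\dots,i+k\}$ (mod $n+k$), while $a_i<b_j$ otherwise. $\mathrm{Inc}(A,B)$ is the set of pairs $(a,b)\in A\times B$ with $a$ incomparable to $b$. An indexed set $\{(x_\alpha,y_\alpha):\alpha\in[m]\}$ of incomparable pairs is an alternating cycle of size $m$ if $x_\alpha\le y_{\alpha-1}$ for all $\alpha\in[m]$ (subscripts cyclic modulo $m$, so $x_1\le y_m$); it is strict if, for all $\alpha,\beta\in[m]$, $x_\alpha\le y_\beta$ holds if and only if $\beta=\alpha-1$. Here $[m]=\{1,\dots,m\}$. *)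

theory Defs
  imports Main
begin

datatype crown_elt = CA nat | CB nat

definition crown_A :: "nat \<Rightarrow> nat \<Rightarrow> crown_elt set" where
  "crown_A n k = CA ` {..<n+k}"

definition crown_B :: "nat \<Rightarrow> nat \<Rightarrow> crown_elt set" where
  "crown_B n k = CB ` {..<n+k}"

text \<open>a_i incomparable to b_j iff j is in {i,...,i+k} mod (n+k), i.e. (j - i) mod (n+k) <= k.\<close>
definition crown_le :: "nat \<Rightarrow> nat \<Rightarrow> crown_elt \<Rightarrow> crown_elt \<Rightarrow> bool" where
  "crown_le n k p q \<longleftrightarrow> p = q \<or>
     (\<exists>i j. p = CA i \<and> q = CB j \<and> i < n + k \<and> j < n + k \<and>
            \<not> ((int j - int i) mod int (n + k) \<le> int k))"

definition incomparable :: "('a \<Rightarrow> 'a \<Rightarrow> bool) \<Rightarrow> 'a \<Rightarrow> 'a \<Rightarrow> bool" where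
  "incomparable le x y \<longleftrightarrow> \<not> le x y \<and> \<not> le y x"

definition crown_Inc :: "nat \<Rightarrow> nat \<Rightarrow> (crown_elt \<times> crown_elt) set" where
  "crown_Inc n k = {(a, b). a \<in> crown_A n k \<and> b \<in> crown_B n k \<and> incomparable (crown_le n k) a b}"

definition cprev :: "nat \<Rightarrow> nat \<Rightarrow> nat" where
  "cprev m \<alpha> = (if \<alpha> = 1 then m else \<alpha> - 1)"

definition alternating_cycle ::
  "('a \<Rightarrow> 'a \<Rightarrow> bool) \<Rightarrow> ('a \<times> 'a) set \<Rightarrow> nat \<Rightarrow> (nat \<Rightarrow> 'a) \<Rightarrow> (nat \<Rightarrow> 'a) \<Rightarrow> bool" where
  "alternating_cycle le P m x y \<longleftrightarrow>
     (\<forall>\<alpha>\<in>{1..m}. (x \<alpha>, y \<alpha>) \<in> P \<and> incomparable le (x \<alpha>) (y \<alpha>) \<and> le (x \<alpha>) (y (cprev m \<alpha>)))"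

definition strict_alternating_cycle ::
  "('a \<Rightarrow> 'a \<Rightarrow> bool) \<Rightarrow> ('a \<times> 'a) set \<Rightarrow> nat \<Rightarrow> (nat \<Rightarrow> 'a) \<Rightarrow> (nat \<Rightarrow> 'a) \<Rightarrow> bool" where
  "strict_alternating_cycle le P m x y \<longleftrightarrow>
     alternating_cycle le P m x y \<and>
     (\<forall>\<alpha>\<in>{1..m}. \<forall>\<beta>\<in>{1..m}. le (x \<alpha>) (y \<beta>) \<longleftrightarrow> \<beta> = cprev m \<alpha>)"

end

theory Submission
  imports Defs
begin

text \<open>
  Put \<open>N = n + k\<close>, read indices mod \<open>N\<close>, write \<open>x\<^sub>\<alpha> = a\<^bsub>i \<alpha>\<^esub>\<close>, and let \<open>p \<alpha>\<close> be the
  index of \<open>y\<^bsub>\<alpha>-1\<^esub>\<close>. Strictness says that \<open>p \<beta>\<close> lies outside the incomparability window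
  \<open>[i \<alpha>, i \<alpha> + k]\<close> exactly when \<open>\<beta> = \<alpha>\<close>. Each \<open>\<alpha>\<close> has \<open>n\<close> residues \<open>z\<close> with
  \<open>(z - i \<alpha>) mod N \<ge> k\<close>; for such \<open>z\<close> the window of \<open>\<alpha>\<close> is an interval of the linear
  order obtained by cutting the circle just after \<open>z\<close>. Then \<open>p \<alpha>\<close> lies before or after this
  interval while every other \<open>p \<beta>\<close> lies inside it, so two indices on the same side would each
  have their point strictly beyond the other's. Hence every \<open>z\<close> is counted by at most two
  indices, and double counting gives \<open>m n \<le> 2 N\<close>.
\<close>

lemma mod_window_as_interval:
  fixes N k z i w :: int
  assumes "0 < N" "0 \<le> k" "k \<le> (z - i) mod N"
  shows "(w - i) mod N \<le> k \<longleftrightarrow>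
    (i - z - 1) mod N \<le> (w - z - 1) mod N \<and> (w - z - 1) mod N \<le> (i - z - 1) mod N + k"
proof -
  define r where "r = (w - i) mod N"
  define s where "s = (z - i) mod N"
  have r: "0 \<le> r" "r < N" and s: "0 \<le> s" "s < N"
    using \<open>0 < N\<close> by (simp_all add: r_def s_def)
  have cut_i: "(i - z - 1) mod N = N - 1 - s"
  proof -
    have "(N - 1 - s) mod N = (N - 1 - (z - i)) mod N"
      unfolding s_def by (rule mod_diff_right_eq)
    also have "\<dots> = (i - z - 1 + N) mod N"
      by (rule arg_cong [where f = "\<lambda>t. t mod N"]) simp
    also have "\<dots> = (i - z - 1) mod N"
      by (rule mod_add_self2)
    finally have "(i - z - 1) mod N = (N - 1 - s) mod N" ..
    with s show ?thesis by simp
  qed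
  have "(w - z - 1) mod N = ((w - i) + (i - z - 1)) mod N"
    by (rule arg_cong [where f = "\<lambda>t. t mod N"]) simp
  also have "\<dots> = (r + (N - 1 - s)) mod N"
    unfolding r_def cut_i [symmetric] by (rule mod_add_eq [symmetric])
  finally have wrap: "(w - z - 1) mod N = (r + (N - 1 - s)) mod N" .
  have cut_w: "(w - z - 1) mod N = (if r \<le> s then N - 1 - s + r else r - s - 1)"
  proof (cases "r \<le> s")
    case True
    then show ?thesis
      unfolding wrap using r s by simp
  next
    case False
    have "(r + (N - 1 - s)) mod N = (r - s - 1 + N) mod N"
      by (rule arg_cong [where f = "\<lambda>t. t mod N"]) simp
    also have "\<dots> = r - s - 1"
      using False r s by simp
    finally show ?thesis
      unfolding wrap using False by simp
  qed
  show ?thesis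
    using assms(3) r s unfolding cut_i cut_w r_def [symmetric] s_def [symmetric] by auto
qed

lemma card_far_indices_le_2:
  fixes N k z :: int and i p :: "'a \<Rightarrow> int"
  assumes "finite S" "0 \<le> k" "k < N"
    and separating: "\<forall>a\<in>S. \<forall>b\<in>S. k < (p b - i a) mod N \<longleftrightarrow> a = b"
  shows "card {a\<in>S. k \<le> (z - i a) mod N} \<le> 2"
proof -
  define F where "F = {a\<in>S. k \<le> (z - i a) mod N}"
  define pos where "pos v = (v - z - 1) mod N" for v
  have window: "(p b - i a) mod N \<le> k \<longleftrightarrow> pos (i a) \<le> pos (p b) \<and> pos (p b) \<le> pos (i a) + k"
    if "a \<in> F" for a b
    using mod_window_as_interval [of N k z "i a" "p b"] that assms(2,3) unfolding F_def pos_def by simp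
  have own: "pos (p a) < pos (i a) \<or> pos (i a) + k < pos (p a)" if "a \<in> F" for a
  proof -
    have "k < (p a - i a) mod N"
      using separating that unfolding F_def by blast
    then show ?thesis
      using window [OF that, of a] by linarith
  qed
  have other: "pos (i a) \<le> pos (p b) \<and> pos (p b) \<le> pos (i a) + k"
    if "a \<in> F" "b \<in> F" "a \<noteq> b" for a b
  proof -
    have "\<not> k < (p b - i a) mod N"
      using separating that unfolding F_def by blast
    then show ?thesis
      using window [OF that(1), of b] by linarith
  qed
  define before where "before = {a\<in>F. pos (p a) < pos (i a)}"
  define after where "after = {a\<in>F. pos (i a) + k < pos (p a)}"
  have fin: "finite before" "finite after"
    using \<open>finite S\<close> unfolding before_def after_def F_def by simp_all
  have before_le: "card before \<le> 1"
    unfolding One_nat_def card_le_Suc0_iff_eq [OF fin(1)]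
  proof (intro ballI, rule ccontr)
    fix a b assume "a \<in> before" "b \<in> before" "a \<noteq> b"
    then show False
      using other [of a b] other [of b a] unfolding before_def by auto
  qed
  have after_le: "card after \<le> 1"
    unfolding One_nat_def card_le_Suc0_iff_eq [OF fin(2)]
  proof (intro ballI, rule ccontr)
    fix a b assume "a \<in> after" "b \<in> after" "a \<noteq> b"
    then show False
      using other [of a b] other [of b a] unfolding after_def by auto
  qed
  have "F = before \<union> after"
    using own unfolding before_def after_def by auto
  then have "card F \<le> card before + card after"
    by (simp add: card_Un_le)
  with before_le after_le show ?thesis
    unfolding F_def by simp
qed

lemma card_far_residues:
  fixes N k i :: int
  assumes "0 \<le> k" "k \<le> N"
  shows "card {z\<in>{0..<N}. k \<le> (z - i) mod N} = nat (N - k)"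
proof -
  have "bij_betw (\<lambda>z. (z - i) mod N) {z\<in>{0..<N}. k \<le> (z - i) mod N} {k..<N}"
  proof (rule bij_betw_byWitness [where f' = "\<lambda>w. (w + i) mod N"])
    show "\<forall>z\<in>{z\<in>{0..<N}. k \<le> (z - i) mod N}. ((z - i) mod N + i) mod N = z"
      by (simp add: mod_add_left_eq)
    show "\<forall>w\<in>{k..<N}. ((w + i) mod N - i) mod N = w"
      using assms(1) by (simp add: mod_diff_left_eq)
  qed (use assms in \<open>auto simp: mod_diff_left_eq\<close>)
  then show ?thesis
    by (simp add: bij_betw_same_card)
qed

lemma card_separating_family_le:
  fixes N k :: int and i p :: "'a \<Rightarrow> int"
  assumes "finite S" "0 \<le> k" "k < N"
    and separating: "\<forall>a\<in>S. \<forall>b\<in>S. k < (p b - i a) mod N \<longleftrightarrow> a = b"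
  shows "int (card S) * (N - k) \<le> 2 * N"
proof -
  have "card S * nat (N - k) = (\<Sum>a\<in>S. card {z\<in>{0..<N}. k \<le> (z - i a) mod N})"
    using card_far_residues [of k N] assms(2,3) by (simp del: atLeastLessThan_iff)
  also have "\<dots> = (\<Sum>z\<in>{0..<N}. card {a\<in>S. k \<le> (z - i a) mod N})"
    by (rule sum_multicount_gen [symmetric]) (use \<open>finite S\<close> in simp_all)
  also have "\<dots> \<le> (\<Sum>z\<in>{0..<N}. 2)"
    by (rule sum_mono) (rule card_far_indices_le_2 [OF assms])
  also have "\<dots> = 2 * nat N"
    by simp
  finally have "int (card S * nat (N - k)) \<le> int (2 * nat N)"
    by (simp only: of_nat_le_iff)
  then show ?thesis
    using assms(2,3) by simp
qed

lemma crown_le_CA_CB_iff: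
  assumes "i < n + k" "j < n + k"
  shows "crown_le n k (CA i) (CB j) \<longleftrightarrow> int k < (int j - int i) mod int (n + k)"
  using assms by (auto simp: crown_le_def)

lemma cprev_mem: "\<alpha> \<in> {1..m} \<Longrightarrow> cprev m \<alpha> \<in> {1..m}"
  by (auto simp: cprev_def)

lemma inj_on_cprev: "inj_on (cprev m) {1..m}"
  by (auto simp: inj_on_def cprev_def split: if_splits)

theorem lemma4p2:
  fixes n k m :: nat and x y :: "nat \<Rightarrow> crown_elt"
  assumes "n \<ge> 3" and "m \<ge> 2"
    and "strict_alternating_cycle (crown_le n k) (crown_Inc n k) m x y"
  shows "m * n \<le> 2 * (n + k)"
proof -
  have in_Inc: "\<forall>\<alpha>\<in>{1..m}. (x \<alpha>, y \<alpha>) \<in> crown_Inc n k"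
    and strict: "\<forall>\<alpha>\<in>{1..m}. \<forall>\<beta>\<in>{1..m}. crown_le n k (x \<alpha>) (y \<beta>) \<longleftrightarrow> \<beta> = cprev m \<alpha>"
    using assms(3) unfolding strict_alternating_cycle_def alternating_cycle_def by auto
  obtain i where i: "\<forall>\<alpha>\<in>{1..m}. i \<alpha> < n + k \<and> x \<alpha> = CA (i \<alpha>)"
    using bchoice [of "{1..m}" "\<lambda>\<alpha> u. u < n + k \<and> x \<alpha> = CA u"] in_Inc
    unfolding crown_Inc_def crown_A_def by fastforce
  obtain j where j: "\<forall>\<beta>\<in>{1..m}. j \<beta> < n + k \<and> y \<beta> = CB (j \<beta>)"
    using bchoice [of "{1..m}" "\<lambda>\<beta> u. u < n + k \<and> y \<beta> = CB u"] in_Inc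
    unfolding crown_Inc_def crown_B_def by fastforce
  have "\<forall>\<alpha>\<in>{1..m}. \<forall>\<beta>\<in>{1..m}.
      int k < (int (j (cprev m \<beta>)) - int (i \<alpha>)) mod int (n + k) \<longleftrightarrow> \<alpha> = \<beta>"
    using strict i j cprev_mem crown_le_CA_CB_iff inj_on_cprev [of m]
    by (metis inj_on_eq_iff)
  then have "int (card {1..m}) * (int (n + k) - int k) \<le> 2 * int (n + k)"
    using assms(1) by (intro card_separating_family_le) auto
  then have "int (m * n) \<le> int (2 * (n + k))"
    by simp
  then show ?thesis
    by (simp only: of_nat_le_iff)
qed

end
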